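(* Let $f$ be a real ternary cubic form and $g$ its AMWP metric on $\mathbb{R}^3+iW$. Then at every point: <ul> <li>every holomorphic bisectional curvature satisfies $B(X,Y)\ge-2$;</li> <li>every holomorphic sectional curvature satisfies $B(X,X)\ge-2$;</li> <li>every Ricci curvature satisfies $\mathrm{Ric}(X)\ge-4$ for unit $X$;</li> <li>the scalar curvature is $\ge-12$.</li> </ul>
   Context: Let $f(y_1,y_2,y_3)$ be a real cubic form. Its index cone $W$ is the open cone of $y$ with $f(y)>0$ at which the Hessian $(\partial^2f/\partial y_i\partial y_j)$ has signature $(1,2)$. The AMWP metric is the Kähler metric on $\mathbb{R}^3+iW$ (coordinates $t_j=x_j+iy_j$) with potential $-\log f(y)$, i.e. $g_{i\bar j}=-\tfrac14\partial^2\log f/\partial y_i\partial y_j$. Its curvature tensor is $$R_{i\bar jk\bar l}=\partial^2 g_{i\bar j}/\partial t_k\partial\bar t_l-\sum_{d,e}g^{\bar e d}(\partial g_{i\bar e}/\partial t_k)(\partial g_{\bar jd}/\partial\bar t_l).$$ For nonzero $(1,0)$-vectors $X,Y$, the holomorphic bisectional curvature is $B(X,Y)=-R(X,\bar X,Y,\bar Y)/(g(X,\bar X)g(Y,\bar Y))$, and the holomorphic sectional curvature is $B(X,X)$. With these conventions the metric with potential $-\log \mathrm{Im}\,t$ on the upper half plane has curvature $-2$. For a unit vector $X$, $\mathrm{Ric}(X)=\sum_jB(X,e_j)$ over a unitary frame $e_j$. The scalar curvature is $\sum_i\mathrm{Ric}(e_i)$. *)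

theory Defs
  imports "HOL-Analysis.Analysis"
begin

definition pd :: "('a::real_normed_vector \<Rightarrow> 'b::real_normed_vector) \<Rightarrow> 'a \<Rightarrow> 'a \<Rightarrow> 'b" where
  "pd F v p = vector_derivative (\<lambda>s::real. F (p + s *\<^sub>R v)) (at 0)"

text \<open>A real ternary cubic form, given by a coefficient tensor c:
  f(y) = sum over i,j,k of c i j k y_i y_j y_k (every cubic form arises this way).\<close>
definition cubic :: "(3 \<Rightarrow> 3 \<Rightarrow> 3 \<Rightarrow> real) \<Rightarrow> real^3 \<Rightarrow> real" where
  "cubic c y = (\<Sum>i\<in>UNIV. \<Sum>j\<in>UNIV. \<Sum>k\<in>UNIV. c i j k * y$i * y$j * y$k)"

definition hessian :: "(real^3 \<Rightarrow> real) \<Rightarrow> real^3 \<Rightarrow> real^3^3" where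
  "hessian F y = (\<chi> i j. pd (\<lambda>z. pd F (axis j 1) z) (axis i 1) y)"

definition signature_1_2 :: "real^3^3 \<Rightarrow> bool" where
  "signature_1_2 H \<longleftrightarrow> (\<exists>l1 l2 l3. l1 > 0 \<and> l2 < 0 \<and> l3 < 0 \<and>
      (\<forall>x. det (x *\<^sub>R mat 1 - H) = (x - l1) * (x - l2) * (x - l3)))"

definition index_cone :: "(real^3 \<Rightarrow> real) \<Rightarrow> (real^3) set" where
  "index_cone f = {y. f y > 0 \<and> signature_1_2 (hessian f y)}"

definition Imv :: "complex^3 \<Rightarrow> real^3" where
  "Imv t = (\<chi> i. Im (t$i))"

definition dt :: "3 \<Rightarrow> (complex^3 \<Rightarrow> complex) \<Rightarrow> complex^3 \<Rightarrow> complex" where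
  "dt k F t = (pd F (axis k 1) t - \<i> * pd F (axis k \<i>) t) / 2"

definition dtb :: "3 \<Rightarrow> (complex^3 \<Rightarrow> complex) \<Rightarrow> complex^3 \<Rightarrow> complex" where
  "dtb k F t = (pd F (axis k 1) t + \<i> * pd F (axis k \<i>) t) / 2"

definition amwp_g :: "(real^3 \<Rightarrow> real) \<Rightarrow> 3 \<Rightarrow> 3 \<Rightarrow> complex^3 \<Rightarrow> complex" where
  "amwp_g f i j t = complex_of_real (- (1/4) * hessian (\<lambda>y. ln (f y)) (Imv t) $ i $ j)"

definition amwp_ginv :: "(real^3 \<Rightarrow> real) \<Rightarrow> 3 \<Rightarrow> 3 \<Rightarrow> complex^3 \<Rightarrow> complex" where
  "amwp_ginv f e d t = matrix_inv (\<chi> i j. amwp_g f i j t) $ e $ d"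

definition amwp_R :: "(real^3 \<Rightarrow> real) \<Rightarrow> 3 \<Rightarrow> 3 \<Rightarrow> 3 \<Rightarrow> 3 \<Rightarrow> complex^3 \<Rightarrow> complex" where
  "amwp_R f i j k l t =
     dt k (dtb l (amwp_g f i j)) t
     - (\<Sum>d\<in>UNIV. \<Sum>e\<in>UNIV. amwp_ginv f e d t * dt k (amwp_g f i e) t * dtb l (amwp_g f d j) t)"

definition gform :: "(real^3 \<Rightarrow> real) \<Rightarrow> complex^3 \<Rightarrow> complex^3 \<Rightarrow> complex^3 \<Rightarrow> complex" where
  "gform f t X Y = (\<Sum>i\<in>UNIV. \<Sum>j\<in>UNIV. amwp_g f i j t * X$i * cnj (Y$j))"

definition Rform :: "(real^3 \<Rightarrow> real) \<Rightarrow> complex^3 \<Rightarrow> complex^3 \<Rightarrow> complex^3 \<Rightarrow> complex" where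
  "Rform f t X Y = (\<Sum>i\<in>UNIV. \<Sum>j\<in>UNIV. \<Sum>k\<in>UNIV. \<Sum>l\<in>UNIV.
      amwp_R f i j k l t * X$i * cnj (X$j) * Y$k * cnj (Y$l))"

definition bisec :: "(real^3 \<Rightarrow> real) \<Rightarrow> complex^3 \<Rightarrow> complex^3 \<Rightarrow> complex^3 \<Rightarrow> real" where
  "bisec f t X Y = Re (- Rform f t X Y / (gform f t X X * gform f t Y Y))"

definition unitary_frame :: "(real^3 \<Rightarrow> real) \<Rightarrow> complex^3 \<Rightarrow> (3 \<Rightarrow> complex^3) \<Rightarrow> bool" where
  "unitary_frame f t e \<longleftrightarrow> (\<forall>a b. gform f t (e a) (e b) = (if a = b then 1 else 0))"

definition ricci :: "(real^3 \<Rightarrow> real) \<Rightarrow> complex^3 \<Rightarrow> (3 \<Rightarrow> complex^3) \<Rightarrow> complex^3 \<Rightarrow> real" where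
  "ricci f t e X = (\<Sum>a\<in>UNIV. bisec f t X (e a))"

definition scalar_curv :: "(real^3 \<Rightarrow> real) \<Rightarrow> complex^3 \<Rightarrow> (3 \<Rightarrow> complex^3) \<Rightarrow> real" where
  "scalar_curv f t e = (\<Sum>a\<in>UNIV. ricci f t e (e a))"

end

theory Submission
  imports Defs
begin

text \<open>
  Since \<open>g\<close> only depends on \<open>y = Im t\<close>, all its Wirtinger derivatives are real derivatives of
  \<open>log f\<close> in \<open>y\<close>; we compute these up to order four and obtain the curvature tensor in
  coordinates.  Writing the derivatives of \<open>log f\<close> through those of \<open>f\<close> and using Euler's
  identities for the homogeneous cubic, the curvature collapses to the identity
  (theorem \<open>curvature_identity\<close>)
    \<open>R(X,\<bar>X,Y,\<bar>Y) = -|D\<^sup>3f(X,Y,-)|\<^sup>2\<^sub>g\<^sub>\<^sup>-\<^sup>1/(64 f\<^sup>2) + g(X,\<bar>X)g(Y,\<bar>Y) + |g(X,\<bar>Y)|\<^sup>2\<close>.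
  On the index cone the Hessian of \<open>f\<close> has signature (1,2) and \<open>y\<close> is timelike for it, so a
  reverse Cauchy--Schwarz inequality shows that \<open>g\<close> is positive semidefinite and nondegenerate.
  Then the first term of the identity is nonpositive, and Cauchy--Schwarz for \<open>g\<close> gives
  \<open>B(X,Y) \<ge> -2\<close>; summing over a unitary frame, whose completeness gives
  \<open>\<Sum>\<^sub>a |g(X,\<bar>e\<^sub>a)|\<^sup>2 = 1\<close>, yields \<open>Ric \<ge> -4\<close> and scalar curvature \<open>\<ge> -12\<close>.
\<close>

section \<open>Directional derivatives\<close>

lemma pd_has_derivative:
  assumes "(F has_derivative F') (at p)"
  shows "pd F v p = F' v"
proof -
  have "((\<lambda>s::real. p + s *\<^sub>R v) has_derivative (\<lambda>s. s *\<^sub>R v)) (at 0)"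
    by (auto intro!: derivative_eq_intros)
  then have "((\<lambda>s::real. F (p + s *\<^sub>R v)) has_derivative (\<lambda>s. F' (s *\<^sub>R v))) (at 0)"
    using has_derivative_compose assms by fastforce
  moreover have "(\<lambda>s. F' (s *\<^sub>R v)) = (\<lambda>s. s *\<^sub>R F' v)"
    using has_derivative_linear[OF assms] by (simp add: linear_scale)
  ultimately have "((\<lambda>s::real. F (p + s *\<^sub>R v)) has_vector_derivative F' v) (at 0)"
    unfolding has_vector_derivative_def by simp
  then show ?thesis unfolding pd_def by (rule vector_derivative_at)
qed

lemma pd_cong_open:
  assumes "open S" "p \<in> S" "\<And>z. z \<in> S \<Longrightarrow> F z = G z"
  shows "pd F v p = pd G v p"
proof -
  have "continuous_on UNIV (\<lambda>s::real. p + s *\<^sub>R v)" by (intro continuous_intros)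
  then have "open ((\<lambda>s::real. p + s *\<^sub>R v) -` S)"
    using continuous_on_open_vimage[OF open_UNIV] assms(1) by auto
  then have "\<forall>\<^sub>F s in nhds 0. p + s *\<^sub>R v \<in> S"
    using assms(2) eventually_nhds_in_open by fastforce
  then have "\<forall>\<^sub>F s in nhds 0. s \<in> UNIV \<longrightarrow> F (p + s *\<^sub>R v) = G (p + s *\<^sub>R v)"
    by (rule eventually_mono) (simp add: assms(3))
  then show ?thesis unfolding pd_def by (rule vector_derivative_cong_eq) simp_all
qed

lemma has_derivative_component: "((\<lambda>x::real^'n. x$i) has_derivative (\<lambda>h. h$i)) F"
  by (rule bounded_linear.has_derivative[OF bounded_linear_vec_nth]) (auto intro: has_derivative_ident)

lemma sum_axis: "(\<Sum>i\<in>UNIV. f i * (axis j 1 :: real^'n) $ i) = f j"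
proof -
  have "\<And>i. f i * (axis j 1 :: real^'n) $ i = (if j = i then f i else 0)" by (simp add: axis_def)
  then show ?thesis by simp
qed

section \<open>Derivatives of a ternary cubic form\<close>

text \<open>The third derivative of the cubic form with coefficient tensor \<open>c\<close> (a constant, fully symmetric tensor).\<close>

definition d3f :: "(3\<Rightarrow>3\<Rightarrow>3\<Rightarrow>real) \<Rightarrow> 3\<Rightarrow>3\<Rightarrow>3\<Rightarrow>real" where
  "d3f c i j k = c i j k + c i k j + c j i k + c j k i + c k i j + c k j i"

definition d1f :: "(3\<Rightarrow>3\<Rightarrow>3\<Rightarrow>real) \<Rightarrow> real^3 \<Rightarrow> 3 \<Rightarrow> real" where
  "d1f c y i = (\<Sum>j\<in>UNIV. \<Sum>k\<in>UNIV. d3f c i j k * y$j * y$k) / 2"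

definition d2f :: "(3\<Rightarrow>3\<Rightarrow>3\<Rightarrow>real) \<Rightarrow> real^3 \<Rightarrow> 3 \<Rightarrow> 3 \<Rightarrow> real" where
  "d2f c y i j = (\<Sum>k\<in>UNIV. d3f c i j k * y$k)"

lemma d3f_swap12: "d3f c j i k = d3f c i j k" unfolding d3f_def by simp
lemma d3f_swap23: "d3f c i k j = d3f c i j k" unfolding d3f_def by simp
lemma d2f_sym: "d2f c y j i = d2f c y i j" unfolding d2f_def by (simp add: d3f_swap12)

lemma cubic_has_derivative: "(cubic c has_derivative (\<lambda>h. \<Sum>i\<in>UNIV. d1f c y i * h$i)) (at y)"
proof -
  have "(cubic c has_derivative (\<lambda>h. \<Sum>i\<in>UNIV. \<Sum>j\<in>UNIV. \<Sum>k\<in>UNIV.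
      c i j k * (h$i * y$j * y$k + y$i * h$j * y$k + y$i * y$j * h$k))) (at y)"
    unfolding cubic_def[abs_def]
    by (intro has_derivative_sum) (auto intro!: derivative_eq_intros has_derivative_component simp: algebra_simps)
  moreover have "(\<lambda>h. \<Sum>i\<in>UNIV. \<Sum>j\<in>UNIV. \<Sum>k\<in>UNIV.
      c i j k * (h$i * y$j * y$k + y$i * h$j * y$k + y$i * y$j * h$k)) = (\<lambda>h. \<Sum>i\<in>UNIV. d1f c y i * h$i)"
    by (rule ext) (simp add: sum_3 d1f_def d3f_def field_simps; algebra)
  ultimately show ?thesis by simp
qed

lemma d1f_has_derivative: "((\<lambda>y. d1f c y i) has_derivative (\<lambda>h. \<Sum>j\<in>UNIV. d2f c y i j * h$j)) (at y)"
proof -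
  have "((\<lambda>y. d1f c y i) has_derivative (\<lambda>h. (\<Sum>j\<in>UNIV. \<Sum>k\<in>UNIV.
      d3f c i j k * (h$j * y$k + y$j * h$k)) / 2)) (at y)"
    unfolding d1f_def[abs_def]
    by (auto intro!: derivative_eq_intros has_derivative_component simp: algebra_simps)
  moreover have "(\<lambda>h. (\<Sum>j\<in>UNIV. \<Sum>k\<in>UNIV.
      d3f c i j k * (h$j * y$k + y$j * h$k)) / 2) = (\<lambda>h. \<Sum>j\<in>UNIV. d2f c y i j * h$j)"
    by (rule ext) (simp add: sum_3 d2f_def d3f_swap12 d3f_swap23 field_simps; algebra)
  ultimately show ?thesis by simp
qed

lemma d2f_has_derivative: "((\<lambda>y. d2f c y i j) has_derivative (\<lambda>h. \<Sum>k\<in>UNIV. d3f c i j k * h$k)) (at y)"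
  unfolding d2f_def[abs_def]
  by (auto intro!: derivative_eq_intros has_derivative_component simp: algebra_simps)

lemmas cubic_derivatives = cubic_has_derivative d1f_has_derivative d2f_has_derivative

lemma d2f_euler: "(\<Sum>k\<in>UNIV. d2f c y i k * y$k) = 2 * d1f c y i"
  unfolding d2f_def d1f_def by (simp add: sum_3 field_simps)

lemma d1f_euler: "(\<Sum>i\<in>UNIV. d1f c y i * y$i) = 3 * cubic c y"
  unfolding d1f_def cubic_def d3f_def by (simp add: sum_3 field_simps; algebra)

lemma hessian_cubic: "hessian (cubic c) y $ i $ j = d2f c y i j"
proof -
  have "pd (cubic c) (axis j 1) = (\<lambda>z. d1f c z j)"
    by (simp add: fun_eq_iff pd_has_derivative[OF cubic_has_derivative] sum_axis)
  then show ?thesis unfolding hessian_def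
    by (simp add: pd_has_derivative[OF d1f_has_derivative] sum_axis d2f_sym)
qed

section \<open>Derivatives of \<open>log f\<close>\<close>

definition dlog1 :: "(3\<Rightarrow>3\<Rightarrow>3\<Rightarrow>real) \<Rightarrow> 3 \<Rightarrow> real^3 \<Rightarrow> real" where
  "dlog1 c i y = d1f c y i / cubic c y"
definition dlog2 :: "(3\<Rightarrow>3\<Rightarrow>3\<Rightarrow>real) \<Rightarrow> 3 \<Rightarrow> 3 \<Rightarrow> real^3 \<Rightarrow> real" where
  "dlog2 c i j y = d2f c y i j / cubic c y - d1f c y i * d1f c y j / (cubic c y)^2"
definition dlog3 :: "(3\<Rightarrow>3\<Rightarrow>3\<Rightarrow>real) \<Rightarrow> 3 \<Rightarrow> 3 \<Rightarrow> 3 \<Rightarrow> real^3 \<Rightarrow> real" where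
  "dlog3 c i j k y = d3f c i j k / cubic c y
     - (d2f c y i j * d1f c y k + d2f c y i k * d1f c y j + d2f c y j k * d1f c y i) / (cubic c y)^2
     + 2 * d1f c y i * d1f c y j * d1f c y k / (cubic c y)^3"
definition dlog4 :: "(3\<Rightarrow>3\<Rightarrow>3\<Rightarrow>real) \<Rightarrow> 3 \<Rightarrow> 3 \<Rightarrow> 3 \<Rightarrow> 3 \<Rightarrow> real^3 \<Rightarrow> real" where
  "dlog4 c i j k l y =
     - (d3f c i j k * d1f c y l + d3f c i j l * d1f c y k + d3f c i k l * d1f c y j + d3f c j k l * d1f c y i) / (cubic c y)^2
     - (d2f c y i j * d2f c y k l + d2f c y i k * d2f c y j l + d2f c y i l * d2f c y j k) / (cubic c y)^2
     + 2 * (d2f c y i j * d1f c y k * d1f c y l + d2f c y i k * d1f c y j * d1f c y l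
          + d2f c y i l * d1f c y j * d1f c y k + d2f c y j k * d1f c y i * d1f c y l
          + d2f c y j l * d1f c y i * d1f c y k + d2f c y k l * d1f c y i * d1f c y j) / (cubic c y)^3
     - 6 * (d1f c y i * d1f c y j * d1f c y k * d1f c y l) / (cubic c y)^4"

lemma log_cubic_has_derivative:
  assumes "cubic c y > 0"
  shows "((\<lambda>y. ln (cubic c y)) has_derivative (\<lambda>h. \<Sum>j\<in>UNIV. dlog1 c j y * h$j)) (at y)"
  by (rule has_derivative_eq_rhs, (use assms in \<open>auto intro!: derivative_eq_intros cubic_derivatives\<close>)[1])
    (simp add: fun_eq_iff sum_3 dlog1_def divide_inverse distrib_right)

lemma dlog1_has_derivative:
  assumes "cubic c y \<noteq> 0"
  shows "((\<lambda>y. dlog1 c j y) has_derivative (\<lambda>h. \<Sum>i\<in>UNIV. dlog2 c j i y * h$i)) (at y)"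
  unfolding dlog1_def[abs_def]
  by (rule has_derivative_eq_rhs, (use assms in \<open>auto intro!: derivative_eq_intros cubic_derivatives\<close>)[1])
    (use assms in \<open>intro ext, simp add: sum_3 dlog2_def field_simps power2_eq_square; algebra\<close>)

lemma dlog2_has_derivative:
  assumes "cubic c y \<noteq> 0"
  shows "((\<lambda>y. dlog2 c i j y) has_derivative (\<lambda>h. \<Sum>k\<in>UNIV. dlog3 c i j k y * h$k)) (at y)"
  unfolding dlog2_def[abs_def]
  by (rule has_derivative_eq_rhs, (use assms in \<open>auto intro!: derivative_eq_intros cubic_derivatives\<close>)[1])
    (use assms in \<open>intro ext, simp add: sum_3 dlog3_def d2f_sym field_simps power2_eq_square power3_eq_cube; algebra\<close>)

lemma dlog3_has_derivative:
  assumes "cubic c y \<noteq> 0"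
  shows "((\<lambda>y. dlog3 c i j k y) has_derivative (\<lambda>h. \<Sum>l\<in>UNIV. dlog4 c i j k l y * h$l)) (at y)"
  unfolding dlog3_def[abs_def]
  by (rule has_derivative_eq_rhs, (use assms in \<open>auto intro!: derivative_eq_intros cubic_derivatives\<close>)[1])
    (use assms in \<open>intro ext, simp add: sum_3 dlog4_def d3f_swap12 d3f_swap23 d2f_sym field_simps power2_eq_square power3_eq_cube; algebra\<close>)

lemma dlog2_sym: "dlog2 c j i y = dlog2 c i j y"
  unfolding dlog2_def by (simp add: d2f_sym mult.commute)

lemma dlog3_swap12: "dlog3 c j i k y = dlog3 c i j k y"
  unfolding dlog3_def by (simp add: d3f_swap12 d2f_sym algebra_simps)

lemma open_cubic_pos: "open {z. cubic c z > 0}"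
proof -
  have "continuous_on UNIV (cubic c)"
    by (intro continuous_at_imp_continuous_on ballI has_derivative_continuous[OF cubic_has_derivative])
  then have "open (cubic c -` {0<..})"
    by (simp add: continuous_on_open_vimage[OF open_UNIV])
  then show ?thesis by (simp add: vimage_def)
qed

lemma hessian_log_cubic:
  assumes "cubic c y > 0"
  shows "hessian (\<lambda>y. ln (cubic c y)) y $ i $ j = dlog2 c i j y"
proof -
  have d1: "\<And>z. z \<in> {z. cubic c z > 0} \<Longrightarrow> pd (\<lambda>y. ln (cubic c y)) (axis j 1) z = dlog1 c j z"
    using pd_has_derivative[OF log_cubic_has_derivative] sum_axis by simp
  have "pd (\<lambda>z. pd (\<lambda>y. ln (cubic c y)) (axis j 1) z) (axis i 1) y = pd (dlog1 c j) (axis i 1) y"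
    using pd_cong_open[OF open_cubic_pos _ d1] assms by simp
  also have "\<dots> = dlog2 c j i y"
    using pd_has_derivative[OF dlog1_has_derivative] assms by (simp add: sum_axis)
  finally show ?thesis unfolding hessian_def by (simp add: dlog2_sym)
qed

section \<open>The metric and its curvature in coordinates\<close>

lemma Imv_add: "Imv (a + b) = Imv a + Imv b" unfolding Imv_def by (simp add: vec_eq_iff)
lemma Imv_scaleR: "Imv (s *\<^sub>R a) = s *\<^sub>R Imv a" unfolding Imv_def by (simp add: vec_eq_iff)
lemma Imv_axis_1: "Imv (axis k 1) = 0" unfolding Imv_def axis_def by (simp add: vec_eq_iff)
lemma Imv_axis_i: "Imv (axis k \<i>) = axis k 1" unfolding Imv_def axis_def by (simp add: vec_eq_iff)

lemma continuous_on_Imv: "continuous_on UNIV Imv"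
  unfolding Imv_def by (intro continuous_on_vec_lambda continuous_intros)

lemma pd_Im_dependent:
  assumes "open S" "Imv t \<in> S" "\<And>t'. Imv t' \<in> S \<Longrightarrow> A t' = F (Imv t')"
    "(F has_derivative F') (at (Imv t))"
  shows "pd A v t = F' (Imv v)"
proof -
  have "open (Imv -` S)"
    using continuous_on_open_vimage[OF open_UNIV] continuous_on_Imv assms(1) by auto
  then have "pd A v t = pd (\<lambda>t. F (Imv t)) v t"
    by (rule pd_cong_open) (use assms in auto)
  also have "\<dots> = pd F (Imv v) (Imv t)"
    unfolding pd_def by (simp add: Imv_add Imv_scaleR)
  also have "\<dots> = F' (Imv v)" by (rule pd_has_derivative[OF assms(4)])
  finally show ?thesis .
qed

lemma wirtinger_Im_dependent:
  assumes "open S" "Imv t \<in> S" "\<And>t'. Imv t' \<in> S \<Longrightarrow> A t' = F (Imv t')"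
    "(F has_derivative F') (at (Imv t))"
  shows "dt k A t = - \<i> * F' (axis k 1) / 2" "dtb k A t = \<i> * F' (axis k 1) / 2"
  using pd_Im_dependent[OF assms, of "axis k 1"] pd_Im_dependent[OF assms, of "axis k \<i>"]
    linear_0[OF has_derivative_linear[OF assms(4)]]
  unfolding dt_def dtb_def Imv_axis_1 Imv_axis_i by simp_all

lemma amwp_g_cubic:
  assumes "cubic c (Imv t) > 0"
  shows "amwp_g (cubic c) i j t = complex_of_real (- dlog2 c i j (Imv t) / 4)"
  unfolding amwp_g_def using hessian_log_cubic[OF assms] by simp

lemma amwp_g_wirtinger:
  assumes "cubic c (Imv t) > 0"
  shows "dt k (amwp_g (cubic c) i j) t = \<i> * complex_of_real (dlog3 c i j k (Imv t)) / 8"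
        "dtb k (amwp_g (cubic c) i j) t = - \<i> * complex_of_real (dlog3 c i j k (Imv t)) / 8"
proof -
  have d: "((\<lambda>y. complex_of_real (- dlog2 c i j y / 4)) has_derivative
     (\<lambda>h. complex_of_real (- (\<Sum>k\<in>UNIV. dlog3 c i j k (Imv t) * h$k) / 4))) (at (Imv t))"
    using assms by (auto intro!: derivative_eq_intros dlog2_has_derivative)
  have e: "\<And>t'. Imv t' \<in> {z. cubic c z > 0} \<Longrightarrow>
      amwp_g (cubic c) i j t' = complex_of_real (- dlog2 c i j (Imv t') / 4)"
    using amwp_g_cubic by simp
  show "dt k (amwp_g (cubic c) i j) t = \<i> * complex_of_real (dlog3 c i j k (Imv t)) / 8"
    using wirtinger_Im_dependent(1)[OF open_cubic_pos _ e d] assms by (simp add: sum_axis)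
  show "dtb k (amwp_g (cubic c) i j) t = - \<i> * complex_of_real (dlog3 c i j k (Imv t)) / 8"
    using wirtinger_Im_dependent(2)[OF open_cubic_pos _ e d] assms by (simp add: sum_axis)
qed

lemma amwp_g_wirtinger2:
  assumes "cubic c (Imv t) > 0"
  shows "dt k (dtb l (amwp_g (cubic c) i j)) t = - complex_of_real (dlog4 c i j l k (Imv t)) / 16"
proof -
  have d: "((\<lambda>y. - \<i> * complex_of_real (dlog3 c i j l y) / 8) has_derivative
     (\<lambda>h. - \<i> * complex_of_real (\<Sum>m\<in>UNIV. dlog4 c i j l m (Imv t) * h$m) / 8)) (at (Imv t))"
    using assms by (auto intro!: derivative_eq_intros dlog3_has_derivative)
  have e: "\<And>t'. Imv t' \<in> {z. cubic c z > 0} \<Longrightarrow>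
      dtb l (amwp_g (cubic c) i j) t' = - \<i> * complex_of_real (dlog3 c i j l (Imv t')) / 8"
    using amwp_g_wirtinger by simp
  show ?thesis
    using wirtinger_Im_dependent(1)[OF open_cubic_pos _ e d] assms by (simp add: sum_axis)
qed

lemma amwp_R_cubic:
  assumes "cubic c (Imv t) > 0"
  shows "amwp_R (cubic c) i j k l t = - complex_of_real (dlog4 c i j l k (Imv t)) / 16
     - (\<Sum>d\<in>UNIV. \<Sum>e\<in>UNIV. amwp_ginv (cubic c) e d t * complex_of_real (dlog3 c i e k (Imv t))
          * complex_of_real (dlog3 c d j l (Imv t))) / 64"
  unfolding amwp_R_def amwp_g_wirtinger2[OF assms] amwp_g_wirtinger[OF assms]
  by (simp add: sum_divide_distrib algebra_simps)

section \<open>Contracting the curvature tensor\<close>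

lemma sum_lincomb3:
  fixes f p q r :: "'n::finite \<Rightarrow> 'a::field"
  shows "(\<Sum>k\<in>UNIV. f k * (\<alpha> * p k + \<beta> * q k - \<gamma> * r k) / a) =
   (\<alpha> * (\<Sum>k\<in>UNIV. f k * p k) + \<beta> * (\<Sum>k\<in>UNIV. f k * q k) - \<gamma> * (\<Sum>k\<in>UNIV. f k * r k)) / a"
  unfolding sum_divide_distrib[symmetric]
  by (simp add: sum_distrib_left sum.distrib sum_subtractf algebra_simps)

lemma sum_lincomb2:
  fixes p q z :: "'n::finite \<Rightarrow> 'a::field"
  shows "(\<Sum>e\<in>UNIV. ((- p e / a + q e * L / b) / 4) * z e)
    = (- (\<Sum>e\<in>UNIV. p e * z e) / a + L * (\<Sum>e\<in>UNIV. q e * z e) / b) / 4"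
proof -
  have "(\<Sum>e\<in>UNIV. ((- p e / a + q e * L / b) / 4) * z e)
      = (\<Sum>e\<in>UNIV. (- (p e * z e) / a + L * (q e * z e) / b) / 4)"
    by (rule sum.cong) (simp_all add: times_divide_eq_left times_divide_eq_right algebra_simps)
  also have "\<dots> = (- (\<Sum>e\<in>UNIV. p e * z e) / a + L * (\<Sum>e\<in>UNIV. q e * z e) / b) / 4"
    by (simp only: sum_divide_distrib[symmetric] sum.distrib sum_distrib_left[symmetric] sum_negf)
  finally show ?thesis .
qed

lemma sum_div1:
  fixes x :: "'n::finite \<Rightarrow> complex" and w :: "complex^'n"
  shows "(\<Sum>e\<in>UNIV. (x e / a) * w$e) = (\<Sum>e\<in>UNIV. x e * w$e) / a"
  by (simp add: sum_divide_distrib)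

lemma sum_div2:
  fixes g :: "'n::finite\<Rightarrow>'n\<Rightarrow>complex" and x z :: "'n \<Rightarrow> complex"
  shows "(\<Sum>d\<in>UNIV. \<Sum>e\<in>UNIV. g e d * (x e / a) * (z d / a)) = (\<Sum>d\<in>UNIV. \<Sum>e\<in>UNIV. g e d * x e * z d) / a^2"
  by (simp add: sum_divide_distrib power2_eq_square)

definition cvec :: "complex^'n \<Rightarrow> complex^'n" where
  "cvec X = (\<chi> i. cnj (X$i))"

definition complex_vec :: "real^'n \<Rightarrow> complex^'n" where
  "complex_vec y = (\<chi> i. complex_of_real (y$i))"

definition lin :: "(3\<Rightarrow>3\<Rightarrow>3\<Rightarrow>real) \<Rightarrow> real^3 \<Rightarrow> complex^3 \<Rightarrow> complex" where
  "lin c y A = (\<Sum>i\<in>UNIV. of_real (d1f c y i) * A$i)"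

definition bil :: "(3\<Rightarrow>3\<Rightarrow>3\<Rightarrow>real) \<Rightarrow> real^3 \<Rightarrow> complex^3 \<Rightarrow> complex^3 \<Rightarrow> complex" where
  "bil c y A B = (\<Sum>i\<in>UNIV. \<Sum>j\<in>UNIV. of_real (d2f c y i j) * A$i * B$j)"

definition tri :: "(3\<Rightarrow>3\<Rightarrow>3\<Rightarrow>real) \<Rightarrow> complex^3 \<Rightarrow> complex^3 \<Rightarrow> complex^3 \<Rightarrow> complex" where
  "tri c A B C = (\<Sum>i\<in>UNIV. \<Sum>j\<in>UNIV. \<Sum>k\<in>UNIV. of_real (d3f c i j k) * A$i * B$j * C$k)"

definition bil_vec :: "(3\<Rightarrow>3\<Rightarrow>3\<Rightarrow>real) \<Rightarrow> real^3 \<Rightarrow> complex^3 \<Rightarrow> 3 \<Rightarrow> complex" where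
  "bil_vec c y A e = (\<Sum>k\<in>UNIV. complex_of_real (d2f c y e k) * A$k)"

definition tri_vec :: "(3\<Rightarrow>3\<Rightarrow>3\<Rightarrow>real) \<Rightarrow> complex^3 \<Rightarrow> complex^3 \<Rightarrow> 3 \<Rightarrow> complex" where
  "tri_vec c A B e = (\<Sum>i\<in>UNIV. \<Sum>k\<in>UNIV. complex_of_real (d3f c e i k) * A$i * B$k)"

lemma tri_swap12: "tri c B A C = tri c A B C"
  unfolding tri_def by (simp add: sum_3 d3f_swap12 d3f_swap23 algebra_simps)

lemma tri_swap23: "tri c A C B = tri c A B C"
  unfolding tri_def by (simp add: sum_3 d3f_swap12 d3f_swap23 algebra_simps)

lemma bil_sym: "bil c y B A = bil c y A B"
  unfolding bil_def by (simp add: sum_3 d2f_sym algebra_simps)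

lemma tri_complex_vec: "tri c (complex_vec y) A B = bil c y A B"
  unfolding tri_def bil_def complex_vec_def d2f_def by (simp add: sum_3 d3f_swap12 d3f_swap23 algebra_simps)

lemma lin_complex_vec: "lin c y (complex_vec y) = 3 * complex_of_real (cubic c y)"
proof -
  have "lin c y (complex_vec y) = complex_of_real (\<Sum>k\<in>UNIV. d1f c y k * y$k)"
    unfolding complex_vec_def lin_def by simp
  then show ?thesis by (simp add: d1f_euler)
qed

lemma bil_vec_complex_vec: "bil_vec c y (complex_vec y) i = 2 * complex_of_real (d1f c y i)"
proof -
  have "bil_vec c y (complex_vec y) i = complex_of_real (\<Sum>k\<in>UNIV. d2f c y i k * y$k)"
    unfolding complex_vec_def bil_vec_def by simp
  then show ?thesis by (simp add: d2f_euler)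
qed

lemma dot_tri_vec: "(\<Sum>e\<in>UNIV. tri_vec c A B e * Z$e) = tri c Z A B"
  unfolding tri_vec_def tri_def by (simp add: sum_3 algebra_simps)

lemma dot_bil_vec: "(\<Sum>e\<in>UNIV. Z$e * bil_vec c y W e) = bil c y Z W"
  unfolding bil_def bil_vec_def by (simp add: sum_3 algebra_simps)

lemma dot_d1f: "(\<Sum>e\<in>UNIV. complex_of_real (d1f c y e) * Z$e) = lin c y Z"
  unfolding lin_def by simp

lemma tri_vec_cvec: "tri_vec c (cvec X) (cvec Y) d = cnj (tri_vec c X Y d)"
  unfolding tri_vec_def cvec_def by simp

lemma cvec_cvec [simp]: "cvec (cvec X) = X"
  unfolding cvec_def by (simp add: vec_eq_iff)

definition contract4 :: "('n\<Rightarrow>'n\<Rightarrow>'n\<Rightarrow>'n\<Rightarrow>complex) \<Rightarrow> complex^'n \<Rightarrow> complex^'n \<Rightarrow> complex^'n \<Rightarrow> complex^'n \<Rightarrow> complex" where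
  "contract4 F A B C D = (\<Sum>p\<in>UNIV. \<Sum>q\<in>UNIV. \<Sum>r\<in>UNIV. \<Sum>s\<in>UNIV. F p q r s * A$p * B$q * C$r * D$s)"

lemma contract4_linear:
  "contract4 (\<lambda>p q r s. F p q r s + G p q r s) A B C D = contract4 F A B C D + contract4 G A B C D"
  "contract4 (\<lambda>p q r s. F p q r s - G p q r s) A B C D = contract4 F A B C D - contract4 G A B C D"
  "contract4 (\<lambda>p q r s. - F p q r s) A B C D = - contract4 F A B C D"
  "contract4 (\<lambda>p q r s. k * F p q r s) A B C D = k * contract4 F A B C D"
  "contract4 (\<lambda>p q r s. F p q r s / k) A B C D = contract4 F A B C D / k"
  unfolding contract4_def
  by (simp_all add: sum.distrib sum_subtractf sum_negf sum_distrib_left sum_divide_distrib algebra_simps)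

text \<open>They are grouped by the shape of the product so that they can be applied in order,
  finest factorisation first.\<close>

lemma contract4_factor_1111:
  fixes A B C D :: "complex^3"
  shows
  "contract4 (\<lambda>p q r s. g p * h q * k r * m s) A B C D = (\<Sum>p\<in>UNIV. g p * A$p) * (\<Sum>p\<in>UNIV. h p * B$p) * (\<Sum>p\<in>UNIV. k p * C$p) * (\<Sum>p\<in>UNIV. m p * D$p)"
  unfolding contract4_def by (simp add: sum_3 algebra_simps)

lemma contract4_factor_211:
  fixes A B C D :: "complex^3"
  shows
  "contract4 (\<lambda>p q r s. P p q * g r * h s) A B C D = (\<Sum>p\<in>UNIV. \<Sum>q\<in>UNIV. P p q * A$p * B$q) * (\<Sum>p\<in>UNIV. g p * C$p) * (\<Sum>p\<in>UNIV. h p * D$p)"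
  "contract4 (\<lambda>p q r s. P p r * g q * h s) A B C D = (\<Sum>p\<in>UNIV. \<Sum>q\<in>UNIV. P p q * A$p * C$q) * (\<Sum>p\<in>UNIV. g p * B$p) * (\<Sum>p\<in>UNIV. h p * D$p)"
  "contract4 (\<lambda>p q r s. P p s * g q * h r) A B C D = (\<Sum>p\<in>UNIV. \<Sum>q\<in>UNIV. P p q * A$p * D$q) * (\<Sum>p\<in>UNIV. g p * B$p) * (\<Sum>p\<in>UNIV. h p * C$p)"
  "contract4 (\<lambda>p q r s. P q r * g p * h s) A B C D = (\<Sum>p\<in>UNIV. \<Sum>q\<in>UNIV. P p q * B$p * C$q) * (\<Sum>p\<in>UNIV. g p * A$p) * (\<Sum>p\<in>UNIV. h p * D$p)"
  "contract4 (\<lambda>p q r s. P q s * g p * h r) A B C D = (\<Sum>p\<in>UNIV. \<Sum>q\<in>UNIV. P p q * B$p * D$q) * (\<Sum>p\<in>UNIV. g p * A$p) * (\<Sum>p\<in>UNIV. h p * C$p)"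
  "contract4 (\<lambda>p q r s. P r s * g p * h q) A B C D = (\<Sum>p\<in>UNIV. \<Sum>q\<in>UNIV. P p q * C$p * D$q) * (\<Sum>p\<in>UNIV. g p * A$p) * (\<Sum>p\<in>UNIV. h p * B$p)"
  unfolding contract4_def by (simp_all add: sum_3 algebra_simps)

lemma contract4_factor_31_22:
  fixes A B C D :: "complex^3"
  shows
  "contract4 (\<lambda>p q r s. T p q r * g s) A B C D = (\<Sum>p\<in>UNIV. \<Sum>q\<in>UNIV. \<Sum>r\<in>UNIV. T p q r * A$p * B$q * C$r) * (\<Sum>s\<in>UNIV. g s * D$s)"
  "contract4 (\<lambda>p q r s. T p q s * g r) A B C D = (\<Sum>p\<in>UNIV. \<Sum>q\<in>UNIV. \<Sum>r\<in>UNIV. T p q r * A$p * B$q * D$r) * (\<Sum>s\<in>UNIV. g s * C$s)"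
  "contract4 (\<lambda>p q r s. T p r s * g q) A B C D = (\<Sum>p\<in>UNIV. \<Sum>q\<in>UNIV. \<Sum>r\<in>UNIV. T p q r * A$p * C$q * D$r) * (\<Sum>s\<in>UNIV. g s * B$s)"
  "contract4 (\<lambda>p q r s. T q r s * g p) A B C D = (\<Sum>p\<in>UNIV. \<Sum>q\<in>UNIV. \<Sum>r\<in>UNIV. T p q r * B$p * C$q * D$r) * (\<Sum>s\<in>UNIV. g s * A$s)"
  "contract4 (\<lambda>p q r s. P p q * Q r s) A B C D = (\<Sum>p\<in>UNIV. \<Sum>q\<in>UNIV. P p q * A$p * B$q) * (\<Sum>p\<in>UNIV. \<Sum>q\<in>UNIV. Q p q * C$p * D$q)"
  "contract4 (\<lambda>p q r s. P p r * Q q s) A B C D = (\<Sum>p\<in>UNIV. \<Sum>q\<in>UNIV. P p q * A$p * C$q) * (\<Sum>p\<in>UNIV. \<Sum>q\<in>UNIV. Q p q * B$p * D$q)"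
  "contract4 (\<lambda>p q r s. P p s * Q q r) A B C D = (\<Sum>p\<in>UNIV. \<Sum>q\<in>UNIV. P p q * A$p * D$q) * (\<Sum>p\<in>UNIV. \<Sum>q\<in>UNIV. Q p q * B$p * C$q)"
  unfolding contract4_def by (simp_all add: sum_3 algebra_simps)

lemma contract4_dlog4:
  assumes "cubic c y \<noteq> 0"
  shows "contract4 (\<lambda>p q r s. complex_of_real (dlog4 c p q r s y)) A B C D =
   - (tri c A B C * lin c y D + tri c A B D * lin c y C + tri c A C D * lin c y B + tri c B C D * lin c y A) / (complex_of_real (cubic c y))^2
   - (bil c y A B * bil c y C D + bil c y A C * bil c y B D + bil c y A D * bil c y B C) / (complex_of_real (cubic c y))^2
   + 2 * (bil c y A B * lin c y C * lin c y D + bil c y A C * lin c y B * lin c y D + bil c y A D * lin c y B * lin c y C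
        + bil c y B C * lin c y A * lin c y D + bil c y B D * lin c y A * lin c y C + bil c y C D * lin c y A * lin c y B) / (complex_of_real (cubic c y))^3
   - 6 * (lin c y A * lin c y B * lin c y C * lin c y D) / (complex_of_real (cubic c y))^4"
  unfolding dlog4_def of_real_diff of_real_add of_real_minus of_real_mult of_real_divide of_real_power of_real_numeral
  by (simp only: contract4_linear contract4_factor_1111, simp only: contract4_factor_211,
      simp only: contract4_factor_31_22 tri_def[symmetric] bil_def[symmetric] lin_def[symmetric])

text \<open>The correction vector \<open>\<omega>(A,B)\<close>: the third derivative of \<open>log f\<close> contracted with \<open>A,B\<close> differs
  from \<open>D\<^sup>3f(A,B,-)/f\<close> by \<open>4g(\<omega>(A,B),-)\<close> (lemma \<open>dlog3_vec_decomp\<close>).\<close>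

definition omega :: "(3\<Rightarrow>3\<Rightarrow>3\<Rightarrow>real) \<Rightarrow> real^3 \<Rightarrow> complex^3 \<Rightarrow> complex^3 \<Rightarrow> complex^3" where
  "omega c y A B = (\<chi> k. (lin c y B * A$k + lin c y A * B$k - bil c y A B * complex_vec y $ k) / complex_of_real (cubic c y))"

definition dlog3_vec :: "(3\<Rightarrow>3\<Rightarrow>3\<Rightarrow>real) \<Rightarrow> real^3 \<Rightarrow> complex^3 \<Rightarrow> complex^3 \<Rightarrow> 3 \<Rightarrow> complex" where
  "dlog3_vec c y A B e = (\<Sum>i\<in>UNIV. \<Sum>k\<in>UNIV. complex_of_real (dlog3 c e i k y) * A$i * B$k)"

lemma dlog3_vec_expand:
  assumes "cubic c y \<noteq> 0"
  shows "dlog3_vec c y A B e = tri_vec c A B e / complex_of_real (cubic c y)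
    - (bil_vec c y A e * lin c y B + bil_vec c y B e * lin c y A + bil c y A B * complex_of_real (d1f c y e)) / (complex_of_real (cubic c y))^2
    + 2 * complex_of_real (d1f c y e) * lin c y A * lin c y B / (complex_of_real (cubic c y))^3"
proof -
  let ?a = "cubic c y"
  define N where "N = (\<lambda>i k. d3f c e i k * ?a^2 - (d2f c y e i * d1f c y k + d2f c y e k * d1f c y i + d2f c y i k * d1f c y e) * ?a
      + 2 * d1f c y e * d1f c y i * d1f c y k)"
  have "\<And>i k. dlog3 c e i k y = N i k / ?a^3"
    unfolding N_def dlog3_def using assms by (simp add: field_simps power2_eq_square power3_eq_cube)
  then have "dlog3_vec c y A B e = (\<Sum>i\<in>UNIV. \<Sum>k\<in>UNIV. complex_of_real (N i k) * A$i * B$k) / (complex_of_real ?a)^3"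
    unfolding dlog3_vec_def by (simp add: sum_divide_distrib)
  also have "(\<Sum>i\<in>UNIV. \<Sum>k\<in>UNIV. complex_of_real (N i k) * A$i * B$k) =
     tri_vec c A B e * (complex_of_real ?a)^2 - (bil_vec c y A e * lin c y B + bil_vec c y B e * lin c y A + bil c y A B * complex_of_real (d1f c y e)) * complex_of_real ?a
     + 2 * complex_of_real (d1f c y e) * lin c y A * lin c y B"
    unfolding N_def tri_vec_def bil_vec_def lin_def bil_def by (simp add: sum_3 algebra_simps)
  finally show ?thesis using assms by (simp add: field_simps power2_eq_square power3_eq_cube)
qed

text \<open>How the forms act on \<open>\<omega>\<close>; \<open>\<omega>\<close> involves \<open>y\<close>, on which the Euler identities apply.\<close>

lemma bil_vec_omega:
  "bil_vec c y (omega c y A B) e = (lin c y B * bil_vec c y A e + lin c y A * bil_vec c y B e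
      - bil c y A B * (2 * complex_of_real (d1f c y e))) / complex_of_real (cubic c y)"
  unfolding bil_vec_def omega_def
  by (simp only: vec_lambda_beta times_divide_eq_right sum_lincomb3 bil_vec_def[symmetric] bil_vec_complex_vec)

lemma lin_omega:
  "lin c y (omega c y A B) = (2 * lin c y A * lin c y B - 3 * bil c y A B * complex_of_real (cubic c y)) / complex_of_real (cubic c y)"
proof -
  have "lin c y (omega c y A B) = (lin c y B * lin c y A + lin c y A * lin c y B - bil c y A B * lin c y (complex_vec y)) / complex_of_real (cubic c y)"
    unfolding lin_def omega_def by (simp only: vec_lambda_beta times_divide_eq_right sum_lincomb3)
  then show ?thesis by (simp add: lin_complex_vec algebra_simps)
qed

lemma bil_omega_left:
  "bil c y (omega c y A B) Z = (lin c y B * bil c y A Z + lin c y A * bil c y B Z - bil c y A B * (2 * lin c y Z)) / complex_of_real (cubic c y)"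
proof -
  have "bil c y Z (omega c y A B) = (\<Sum>e\<in>UNIV. Z$e * bil_vec c y (omega c y A B) e)"
    by (simp only: dot_bil_vec)
  also have "\<dots> = (lin c y B * (\<Sum>e\<in>UNIV. Z$e * bil_vec c y A e) + lin c y A * (\<Sum>e\<in>UNIV. Z$e * bil_vec c y B e)
      - bil c y A B * (\<Sum>e\<in>UNIV. Z$e * (2 * complex_of_real (d1f c y e)))) / complex_of_real (cubic c y)"
    by (simp only: bil_vec_omega times_divide_eq_right sum_lincomb3)
  finally show ?thesis
    by (simp add: dot_bil_vec bil_sym sum_distrib_left lin_def mult_ac)
qed

lemma bil_omega_right:
  "bil c y Z (omega c y A B) = (lin c y B * bil c y A Z + lin c y A * bil c y B Z - bil c y A B * (2 * lin c y Z)) / complex_of_real (cubic c y)"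
  using bil_omega_left by (simp add: bil_sym)

lemma tri_vec_omega:
  "(\<Sum>e\<in>UNIV. tri_vec c X Y e * omega c y A B $ e) =
   (lin c y B * tri c A X Y + lin c y A * tri c B X Y - bil c y A B * bil c y X Y) / complex_of_real (cubic c y)"
  unfolding omega_def
  by (simp only: vec_lambda_beta times_divide_eq_right sum_lincomb3 dot_tri_vec tri_complex_vec)

definition gmat :: "(3\<Rightarrow>3\<Rightarrow>3\<Rightarrow>real) \<Rightarrow> complex^3 \<Rightarrow> complex^3^3" where
  "gmat c t = (\<chi> i j. amwp_g (cubic c) i j t)"

lemma gmat_entry:
  assumes "cubic c (Imv t) > 0"
  shows "gmat c t $ i $ j = complex_of_real (- dlog2 c i j (Imv t) / 4)"
  unfolding gmat_def using amwp_g_cubic[OF assms] by simp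

lemma gmat_symmetric:
  assumes "cubic c (Imv t) > 0"
  shows "transpose (gmat c t) = gmat c t"
  unfolding transpose_def using gmat_entry[OF assms] dlog2_sym by (simp add: vec_eq_iff)

lemma gmat_mult_vec:
  assumes "cubic c (Imv t) > 0"
  shows "(gmat c t *v z) $ e = (- bil_vec c (Imv t) z e / complex_of_real (cubic c (Imv t))
      + complex_of_real (d1f c (Imv t) e) * lin c (Imv t) z / (complex_of_real (cubic c (Imv t)))^2) / 4"
  using assms unfolding matrix_vector_mult_def bil_vec_def lin_def
  by (simp add: gmat_entry[OF assms] dlog2_def sum_3 field_simps power2_eq_square)

lemma gform_cubic:
  assumes "cubic c (Imv t) > 0"
  shows "gform (cubic c) t X Y = (- bil c (Imv t) X (cvec Y) / complex_of_real (cubic c (Imv t))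
     + lin c (Imv t) X * lin c (Imv t) (cvec Y) / (complex_of_real (cubic c (Imv t)))^2) / 4"
  using assms unfolding gform_def bil_def lin_def cvec_def
  by (simp add: amwp_g_cubic[OF assms] dlog2_def sum_3 field_simps power2_eq_square)

lemma dlog3_vec_decomp:
  assumes "cubic c (Imv t) > 0"
  shows "dlog3_vec c (Imv t) A B e
    = tri_vec c A B e / complex_of_real (cubic c (Imv t)) + 4 * (gmat c t *v omega c (Imv t) A B) $ e"
proof -
  have a: "cubic c (Imv t) \<noteq> 0" using assms by simp
  show ?thesis
    unfolding dlog3_vec_expand[OF a] gmat_mult_vec[OF assms] bil_vec_omega lin_omega
    using a by (simp add: field_simps power2_eq_square power3_eq_cube; algebra)
qed

lemma gmat_omega_pair:
  assumes "cubic c (Imv t) > 0"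
  shows "(\<Sum>e\<in>UNIV. (gmat c t *v omega c (Imv t) A B) $ e * omega c (Imv t) C D $ e)
     = (- bil c (Imv t) (omega c (Imv t) C D) (omega c (Imv t) A B) / complex_of_real (cubic c (Imv t))
        + lin c (Imv t) (omega c (Imv t) A B) * lin c (Imv t) (omega c (Imv t) C D)
            / (complex_of_real (cubic c (Imv t)))^2) / 4"
  unfolding gmat_mult_vec[OF assms] sum_lincomb2 dot_d1f
  by (simp only: dot_bil_vec[symmetric] mult.commute)

lemma inverse_contraction:
  fixes G Gi :: "complex^3^3"
  assumes inv: "Gi ** G = mat 1" "G ** Gi = mat 1" and sym: "transpose G = G"
  shows "(\<Sum>d\<in>UNIV. \<Sum>e\<in>UNIV. Gi$e$d * (\<alpha> e + 4 * (G *v \<beta>)$e) * (\<gamma> d + 4 * (G *v \<delta>)$d))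
   = (\<Sum>d\<in>UNIV. \<Sum>e\<in>UNIV. Gi$e$d * \<alpha> e * \<gamma> d) + 4 * (\<Sum>e\<in>UNIV. \<alpha> e * \<delta>$e)
     + 4 * (\<Sum>d\<in>UNIV. \<gamma> d * \<beta>$d) + 16 * (\<Sum>d\<in>UNIV. (G *v \<delta>)$d * \<beta>$d)"
proof -
  have "(\<Sum>d\<in>UNIV. \<Sum>e\<in>UNIV. Gi$e$d * (\<alpha> e + 4 * (G *v \<beta>)$e) * (\<gamma> d + 4 * (G *v \<delta>)$d))
   = (\<Sum>d\<in>UNIV. \<Sum>e\<in>UNIV. Gi$e$d * \<alpha> e * \<gamma> d) + 4 * (\<Sum>d\<in>UNIV. \<Sum>e\<in>UNIV. Gi$e$d * \<alpha> e * (G *v \<delta>)$d)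
     + 4 * (\<Sum>d\<in>UNIV. \<Sum>e\<in>UNIV. Gi$e$d * (G *v \<beta>)$e * \<gamma> d)
     + 16 * (\<Sum>d\<in>UNIV. \<Sum>e\<in>UNIV. Gi$e$d * (G *v \<beta>)$e * (G *v \<delta>)$d)"
    by (simp add: sum_3 algebra_simps)
  also have "(\<Sum>d\<in>UNIV. \<Sum>e\<in>UNIV. Gi$e$d * \<alpha> e * (G *v \<delta>)$d) = (\<Sum>e\<in>UNIV. \<alpha> e * ((Gi ** G) *v \<delta>)$e)"
    unfolding matrix_vector_mult_def matrix_matrix_mult_def by (simp add: sum_3 algebra_simps)
  also have "(\<Sum>d\<in>UNIV. \<Sum>e\<in>UNIV. Gi$e$d * (G *v \<beta>)$e * \<gamma> d) = (\<Sum>d\<in>UNIV. \<gamma> d * (\<beta> v* (transpose G ** Gi))$d)"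
    unfolding matrix_vector_mult_def matrix_matrix_mult_def vector_matrix_mult_def transpose_def
    by (simp add: sum_3 algebra_simps)
  also have "(\<Sum>d\<in>UNIV. \<Sum>e\<in>UNIV. Gi$e$d * (G *v \<beta>)$e * (G *v \<delta>)$d) = (\<Sum>d\<in>UNIV. (G *v \<delta>)$d * (\<beta> v* (transpose G ** Gi))$d)"
    unfolding matrix_vector_mult_def matrix_matrix_mult_def vector_matrix_mult_def transpose_def
    by (simp add: sum_3 algebra_simps)
  finally show ?thesis unfolding inv sym by simp
qed

lemma sum4_reindex_contract4:
  fixes F :: "3\<Rightarrow>3\<Rightarrow>3\<Rightarrow>3\<Rightarrow>complex" and A B C D :: "complex^3"
  shows "(\<Sum>i\<in>UNIV. \<Sum>j\<in>UNIV. \<Sum>k\<in>UNIV. \<Sum>l\<in>UNIV. F i j l k * (A$i * B$j * D$k * C$l)) = contract4 F A B C D"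
  unfolding contract4_def by (simp add: sum_3 algebra_simps)

lemma sum4_split:
  fixes A B w :: "3\<Rightarrow>3\<Rightarrow>3\<Rightarrow>3\<Rightarrow>complex"
  shows "(\<Sum>i\<in>UNIV. \<Sum>j\<in>UNIV. \<Sum>k\<in>UNIV. \<Sum>l\<in>UNIV. (- A i j k l / 16 - B i j k l / 64) * w i j k l)
   = - (\<Sum>i\<in>UNIV. \<Sum>j\<in>UNIV. \<Sum>k\<in>UNIV. \<Sum>l\<in>UNIV. A i j k l * w i j k l) / 16
     - (\<Sum>i\<in>UNIV. \<Sum>j\<in>UNIV. \<Sum>k\<in>UNIV. \<Sum>l\<in>UNIV. B i j k l * w i j k l) / 64"
  by (simp add: sum_3 algebra_simps)

lemma sum4_contract_inverse:
  fixes g :: "3\<Rightarrow>3\<Rightarrow>complex" and F H :: "3\<Rightarrow>3\<Rightarrow>3\<Rightarrow>complex" and X Xb Y Yb :: "complex^3"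
  shows "(\<Sum>i\<in>UNIV. \<Sum>j\<in>UNIV. \<Sum>k\<in>UNIV. \<Sum>l\<in>UNIV. (\<Sum>d\<in>UNIV. \<Sum>e\<in>UNIV. g e d * F e i k * H d j l) * (X$i * Xb$j * Y$k * Yb$l))
   = (\<Sum>d\<in>UNIV. \<Sum>e\<in>UNIV. g e d * (\<Sum>i\<in>UNIV. \<Sum>k\<in>UNIV. F e i k * X$i * Y$k) * (\<Sum>j\<in>UNIV. \<Sum>l\<in>UNIV. H d j l * Xb$j * Yb$l))"
proof -
  have pointwise: "\<And>i j k l. (\<Sum>d\<in>UNIV. \<Sum>e\<in>UNIV. g e d * F e i k * H d j l) * (X$i * Xb$j * Y$k * Yb$l)
     = (\<Sum>d\<in>UNIV. \<Sum>e\<in>UNIV. g e d * (F e i k * X$i * Y$k) * (H d j l * Xb$j * Yb$l))"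
    unfolding sum_distrib_right by (simp add: mult_ac)
  have factor: "\<And>d e. g e d * (\<Sum>i\<in>UNIV. \<Sum>k\<in>UNIV. F e i k * X$i * Y$k) * (\<Sum>j\<in>UNIV. \<Sum>l\<in>UNIV. H d j l * Xb$j * Yb$l)
     = (\<Sum>i\<in>UNIV. \<Sum>k\<in>UNIV. \<Sum>j\<in>UNIV. \<Sum>l\<in>UNIV. g e d * (F e i k * X$i * Y$k) * (H d j l * Xb$j * Yb$l))"
    by (simp add: sum_3 algebra_simps)
  have swap: "(\<Sum>i\<in>UNIV. \<Sum>j\<in>UNIV. \<Sum>k\<in>UNIV. \<Sum>l\<in>UNIV. \<Sum>d\<in>UNIV. \<Sum>e\<in>UNIV. g e d * (F e i k * X$i * Y$k) * (H d j l * Xb$j * Yb$l))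
     = (\<Sum>d\<in>UNIV. \<Sum>e\<in>UNIV. \<Sum>i\<in>UNIV. \<Sum>k\<in>UNIV. \<Sum>j\<in>UNIV. \<Sum>l\<in>UNIV. g e d * (F e i k * X$i * Y$k) * (H d j l * Xb$j * Yb$l))"
    by (simp only: sum_3 algebra_simps)
  show ?thesis unfolding pointwise factor swap ..
qed

lemma Rform_contracted:
  assumes "cubic c (Imv t) > 0"
  shows "Rform (cubic c) t X Y = - contract4 (\<lambda>p q r s. complex_of_real (dlog4 c p q r s (Imv t))) X (cvec X) (cvec Y) Y / 16
    - (\<Sum>d\<in>UNIV. \<Sum>e\<in>UNIV. matrix_inv (gmat c t) $ e $ d * dlog3_vec c (Imv t) X Y e * dlog3_vec c (Imv t) (cvec X) (cvec Y) d) / 64"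
proof -
  let ?Gi = "matrix_inv (gmat c t)" and ?y = "Imv t"
  let ?w = "\<lambda>i j k l. X$i * cvec X $ j * Y$k * cvec Y $ l"
  have "Rform (cubic c) t X Y = (\<Sum>i\<in>UNIV. \<Sum>j\<in>UNIV. \<Sum>k\<in>UNIV. \<Sum>l\<in>UNIV.
      (- complex_of_real (dlog4 c i j l k ?y) / 16
       - (\<Sum>d\<in>UNIV. \<Sum>e\<in>UNIV. ?Gi $ e $ d * complex_of_real (dlog3 c e i k ?y) * complex_of_real (dlog3 c d j l ?y)) / 64)
      * ?w i j k l)"
    unfolding Rform_def amwp_R_cubic[OF assms] cvec_def amwp_ginv_def gmat_def
    by (simp add: mult.assoc dlog3_swap12[of c _ "_::3"])
  also have "\<dots> = - (\<Sum>i\<in>UNIV. \<Sum>j\<in>UNIV. \<Sum>k\<in>UNIV. \<Sum>l\<in>UNIV. complex_of_real (dlog4 c i j l k ?y) * ?w i j k l) / 16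
     - (\<Sum>i\<in>UNIV. \<Sum>j\<in>UNIV. \<Sum>k\<in>UNIV. \<Sum>l\<in>UNIV. (\<Sum>d\<in>UNIV. \<Sum>e\<in>UNIV. ?Gi $ e $ d
          * complex_of_real (dlog3 c e i k ?y) * complex_of_real (dlog3 c d j l ?y)) * ?w i j k l) / 64"
    by (rule sum4_split)
  also have "(\<Sum>i\<in>UNIV. \<Sum>j\<in>UNIV. \<Sum>k\<in>UNIV. \<Sum>l\<in>UNIV. complex_of_real (dlog4 c i j l k ?y) * ?w i j k l)
     = contract4 (\<lambda>p q r s. complex_of_real (dlog4 c p q r s ?y)) X (cvec X) (cvec Y) Y"
    by (rule sum4_reindex_contract4)
  also have "(\<Sum>i\<in>UNIV. \<Sum>j\<in>UNIV. \<Sum>k\<in>UNIV. \<Sum>l\<in>UNIV. (\<Sum>d\<in>UNIV. \<Sum>e\<in>UNIV. ?Gi $ e $ d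
          * complex_of_real (dlog3 c e i k ?y) * complex_of_real (dlog3 c d j l ?y)) * ?w i j k l)
     = (\<Sum>d\<in>UNIV. \<Sum>e\<in>UNIV. ?Gi $ e $ d * dlog3_vec c ?y X Y e * dlog3_vec c ?y (cvec X) (cvec Y) d)"
    unfolding sum4_contract_inverse dlog3_vec_def ..
  finally show ?thesis .
qed

lemma inverse_metric_dlog3:
  assumes pos: "cubic c (Imv t) > 0"
    and inv: "matrix_inv (gmat c t) ** gmat c t = mat 1" "gmat c t ** matrix_inv (gmat c t) = mat 1"
  defines "y \<equiv> Imv t" and "a \<equiv> complex_of_real (cubic c (Imv t))"
  shows "(\<Sum>d\<in>UNIV. \<Sum>e\<in>UNIV. matrix_inv (gmat c t) $ e $ d * dlog3_vec c y A B e * dlog3_vec c y C D d)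
     = (\<Sum>d\<in>UNIV. \<Sum>e\<in>UNIV. matrix_inv (gmat c t) $ e $ d * tri_vec c A B e * tri_vec c C D d) / a^2
       + 4 * ((\<Sum>e\<in>UNIV. tri_vec c A B e * omega c y C D $ e) / a)
       + 4 * ((\<Sum>e\<in>UNIV. tri_vec c C D e * omega c y A B $ e) / a)
       + 16 * (\<Sum>e\<in>UNIV. (gmat c t *v omega c y C D) $ e * omega c y A B $ e)"
proof -
  have "(\<Sum>d\<in>UNIV. \<Sum>e\<in>UNIV. matrix_inv (gmat c t) $ e $ d * dlog3_vec c y A B e * dlog3_vec c y C D d)
      = (\<Sum>d\<in>UNIV. \<Sum>e\<in>UNIV. matrix_inv (gmat c t) $ e $ d
          * ((\<lambda>e. tri_vec c A B e / a) e + 4 * (gmat c t *v omega c y A B) $ e)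
          * ((\<lambda>e. tri_vec c C D e / a) d + 4 * (gmat c t *v omega c y C D) $ d))"
    unfolding y_def a_def dlog3_vec_decomp[OF pos] by simp
  also have "\<dots> = (\<Sum>d\<in>UNIV. \<Sum>e\<in>UNIV. matrix_inv (gmat c t) $ e $ d * (tri_vec c A B e / a) * (tri_vec c C D d / a))
       + 4 * (\<Sum>e\<in>UNIV. (tri_vec c A B e / a) * omega c y C D $ e)
       + 4 * (\<Sum>d\<in>UNIV. (tri_vec c C D d / a) * omega c y A B $ d)
       + 16 * (\<Sum>d\<in>UNIV. (gmat c t *v omega c y C D) $ d * omega c y A B $ d)"
    by (rule inverse_contraction[OF inv gmat_symmetric[OF pos]])
  finally show ?thesis unfolding sum_div2 sum_div1 .
qed

theorem curvature_identity:
  assumes pos: "cubic c (Imv t) > 0"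
    and inv: "matrix_inv (gmat c t) ** gmat c t = mat 1" "gmat c t ** matrix_inv (gmat c t) = mat 1"
  shows "Rform (cubic c) t X Y =
      - (\<Sum>d\<in>UNIV. \<Sum>e\<in>UNIV. matrix_inv (gmat c t) $ e $ d * tri_vec c X Y e * tri_vec c (cvec X) (cvec Y) d)
          / (64 * (complex_of_real (cubic c (Imv t)))^2)
      + gform (cubic c) t X X * gform (cubic c) t Y Y + gform (cubic c) t X Y * gform (cubic c) t Y X"
proof -
  define y where "y = Imv t"
  define a where "a = complex_of_real (cubic c y)"
  define SG where "SG = (\<Sum>d\<in>UNIV. \<Sum>e\<in>UNIV. matrix_inv (gmat c t) $ e $ d * tri_vec c X Y e * tri_vec c (cvec X) (cvec Y) d)"
  have a0: "cubic c y \<noteq> 0" and an: "a \<noteq> 0" using pos unfolding y_def a_def by simp_all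
  have gf: "gform (cubic c) t A B = (- bil c y A (cvec B) / a + lin c y A * lin c y (cvec B) / a^2) / 4" for A B
    unfolding gform_cubic[OF pos] y_def a_def ..
  show ?thesis
    unfolding Rform_contracted[OF pos] inverse_metric_dlog3[OF pos inv] gmat_omega_pair[OF pos]
    unfolding y_def[symmetric] a_def[symmetric] SG_def[symmetric]
    unfolding bil_omega_left bil_omega_right contract4_dlog4[OF a0] tri_vec_omega lin_omega gf cvec_cvec
      a_def[symmetric]
    using an by (simp add: tri_swap12 tri_swap23 bil_sym field_simps power2_eq_square power3_eq_cube power4_eq_xxxx; algebra)
qed

section \<open>Linear algebra\<close>

lemma symmetric_matrix_entry:
  fixes H :: "'a^'n^'n"
  assumes "transpose H = H"
  shows "H$j$i = H$i$j"
proof -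
  have "transpose H $ i $ j = H $ i $ j" using assms by simp
  then show ?thesis by (simp add: transpose_def)
qed

definition herm :: "real^'n^'n \<Rightarrow> complex^'n \<Rightarrow> complex^'n \<Rightarrow> complex" where
  "herm P u v = (\<Sum>i\<in>UNIV. \<Sum>j\<in>UNIV. complex_of_real (P$i$j) * u$i * cnj (v$j))"

lemma herm_swap:
  assumes "transpose P = P"
  shows "herm P v u = cnj (herm P u v)"
proof -
  have "cnj (herm P u v) = (\<Sum>i\<in>UNIV. \<Sum>j\<in>UNIV. complex_of_real (P$i$j) * cnj (u$i) * v$j)"
    unfolding herm_def by simp
  also have "\<dots> = (\<Sum>j\<in>UNIV. \<Sum>i\<in>UNIV. complex_of_real (P$i$j) * cnj (u$i) * v$j)"
    by (rule sum.swap)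
  also have "\<dots> = herm P v u"
    unfolding herm_def by (simp add: symmetric_matrix_entry[OF assms] mult_ac)
  finally show ?thesis ..
qed

lemma herm_self_real:
  assumes "transpose P = P"
  shows "herm P u u = complex_of_real ((\<chi> i. Re (u$i)) \<bullet> (P *v (\<chi> i. Re (u$i))) + (\<chi> i. Im (u$i)) \<bullet> (P *v (\<chi> i. Im (u$i))))"
proof -
  have "Im (herm P u u) = 0"
    using herm_swap[OF assms, of u u] by (simp add: complex_eq_iff)
  moreover have "Re (herm P u u) = (\<chi> i. Re (u$i)) \<bullet> (P *v (\<chi> i. Re (u$i))) + (\<chi> i. Im (u$i)) \<bullet> (P *v (\<chi> i. Im (u$i)))"
    unfolding herm_def inner_vec_def matrix_vector_mult_def
    by (simp add: Re_sum sum_distrib_left sum.distrib algebra_simps)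
  ultimately show ?thesis by (simp add: complex_eq_iff)
qed

lemma herm_self_nonneg:
  assumes "transpose P = P" and "\<And>x. 0 \<le> x \<bullet> (P *v x)"
  shows "Im (herm P u u) = 0" "0 \<le> Re (herm P u u)"
  using herm_self_real[OF assms(1), of u] assms(2) by (simp_all add: add_nonneg_nonneg)

lemma herm_diff_scaled:
  "herm P (u - l *s v) (u - l *s v) = herm P u u - l * herm P v u - cnj l * herm P u v + l * cnj l * herm P v v"
proof -
  have "herm P (u - l *s v) (u - l *s v) = (\<Sum>i\<in>UNIV. \<Sum>j\<in>UNIV.
      complex_of_real (P$i$j) * u$i * cnj (u$j) - l * (complex_of_real (P$i$j) * v$i * cnj (u$j))
      - cnj l * (complex_of_real (P$i$j) * u$i * cnj (v$j)) + l * cnj l * (complex_of_real (P$i$j) * v$i * cnj (v$j)))"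
    unfolding herm_def by (simp add: algebra_simps)
  then show ?thesis unfolding herm_def by (simp add: sum.distrib sum_subtractf sum_distrib_left)
qed

text \<open>Cauchy--Schwarz, obtained by expanding the nonnegative value at \<open>u - (P(u,v)/P(v,v)) v\<close>.\<close>

lemma herm_cauchy_schwarz:
  assumes sym: "transpose P = P" and psd: "\<And>x. 0 \<le> x \<bullet> (P *v x)"
    and vpos: "Re (herm P v v) > 0"
  shows "Re (herm P u v * herm P v u) \<le> Re (herm P u u) * Re (herm P v v)"
proof -
  define b where "b = herm P u v"
  define rv where "rv = Re (herm P v v)"
  define l where "l = b / complex_of_real rv"
  have v: "herm P v v = complex_of_real rv" and u: "herm P u u = complex_of_real (Re (herm P u u))"
    using herm_self_nonneg[OF sym psd] unfolding rv_def by (simp_all add: complex_eq_iff)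
  have bc: "herm P v u = cnj b" unfolding b_def by (rule herm_swap[OF sym])
  have "0 \<le> Re (herm P (u - l *s v) (u - l *s v))" by (rule herm_self_nonneg[OF sym psd])
  also have "herm P (u - l *s v) (u - l *s v) = herm P u u - b * cnj b / complex_of_real rv"
    unfolding herm_diff_scaled bc b_def[symmetric] v l_def using vpos rv_def by (simp add: field_simps)
  finally have "0 \<le> Re (herm P u u) - (Re b ^ 2 + Im b ^ 2) / rv"
    by (simp add: complex_mult_cnj power2_eq_square)
  then have "Re b ^ 2 + Im b ^ 2 \<le> Re (herm P u u) * rv"
    using vpos rv_def by (simp add: field_simps)
  then show ?thesis unfolding bc b_def[symmetric] rv_def by (simp add: power2_eq_square)
qed

lemma lorentz_gram_identity:
  fixes H :: "real^3^3" and y u z :: "real^3"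
  assumes sym: "transpose H = H"
  defines "K \<equiv> \<lambda>v w. (y \<bullet> (H *v y)) * (v \<bullet> (H *v w)) - (y \<bullet> (H *v v)) * (y \<bullet> (H *v w))"
  shows "K u u * K z z - (K u z)^2 = (y \<bullet> (H *v y)) * det H * (u \<bullet> cross3 z y)^2"
proof -
  have s: "H$2$1 = H$1$2" "H$3$1 = H$1$3" "H$3$2 = H$2$3"
    using symmetric_matrix_entry[OF sym] by blast+
  show ?thesis
    unfolding K_def det_3 matrix_vector_mult_def inner_vec_def sum_3 inner_real_def cross3_def
    by (simp only: vec_lambda_beta vector_3 s) algebra
qed

text \<open>A spacelike \<open>z\<close> makes \<open>K\<close> negative somewhere, and
  a nonnegative Gram determinant then forbids \<open>K\<close> from being positive anywhere.\<close>

lemma lorentz_reverse_cauchy_schwarz: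
  fixes H :: "real^3^3" and y z u :: "real^3"
  assumes sym: "transpose H = H" and det: "det H > 0"
    and timelike: "y \<bullet> (H *v y) > 0" and spacelike: "z \<bullet> (H *v z) < 0"
  shows "(y \<bullet> (H *v y)) * (u \<bullet> (H *v u)) \<le> (y \<bullet> (H *v u))^2"
proof -
  define K where "K \<equiv> \<lambda>v w. (y \<bullet> (H *v y)) * (v \<bullet> (H *v w)) - (y \<bullet> (H *v v)) * (y \<bullet> (H *v w))"
  have Kz: "K z z < 0"
    unfolding K_def using mult_pos_neg[OF timelike spacelike] by (smt (verit) zero_le_square)
  have "K u u * K z z - (K u z)^2 = (y \<bullet> (H *v y)) * det H * (u \<bullet> cross3 z y)^2"
    unfolding K_def by (rule lorentz_gram_identity[OF sym])
  moreover have "0 \<le> (y \<bullet> (H *v y)) * det H * (u \<bullet> cross3 z y)^2"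
    using timelike det by simp
  ultimately have "\<not> K u u > 0"
    using Kz by (smt (verit) mult_pos_neg zero_le_power2)
  then show ?thesis unfolding K_def by (simp add: power2_eq_square)
qed

lemma det_rank_one_update:
  fixes H :: "real^3^3" and y :: "real^3"
  shows "det (\<chi> i j. k * H$i$j + (H *v y)$i * (H *v y)$j) = k^3 * det H + k^2 * det H * (y \<bullet> (H *v y))"
  unfolding det_3 matrix_vector_mult_def inner_vec_def sum_3 inner_real_def by (simp add: power2_eq_square power3_eq_cube) algebra

lemma det3_scaleR: "det (r *\<^sub>R A :: real^3^3) = r^3 * det A"
  unfolding det_3 by (simp add: algebra_simps power3_eq_cube)

lemma eigenvector_exists:
  fixes H :: "real^'n^'n"
  assumes "det (l *\<^sub>R mat 1 - H) = 0"
  obtains z where "z \<noteq> 0" "H *v z = l *\<^sub>R z"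
proof -
  have "\<not> invertible (l *\<^sub>R mat 1 - H)" using assms invertible_det_nz by blast
  then obtain z where z: "(l *\<^sub>R mat 1 - H) *v z = 0" "z \<noteq> 0"
    using invertible_left_inverse matrix_left_invertible_ker by blast
  then have "H *v z = l *\<^sub>R z"
    by (simp add: matrix_vector_mult_diff_rdistrib scaleR_matrix_vector_assoc[symmetric])
  with z(2) show thesis by (rule that)
qed

text \<open>A symmetric matrix of signature (1,2) has positive determinant (the product of its
  eigenvalues) and a vector on which its quadratic form is negative (an eigenvector of a
  negative eigenvalue).\<close>

lemma signature_1_2_det_pos:
  fixes H :: "real^3^3"
  assumes "signature_1_2 H"
  shows "det H > 0"
proof -
  obtain l1 l2 l3 where l: "l1 > 0" "l2 < 0" "l3 < 0" "\<And>x. det (x *\<^sub>R mat 1 - H) = (x - l1) * (x - l2) * (x - l3)"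
    using assms unfolding signature_1_2_def by blast
  have "det (0 *\<^sub>R mat 1 - H) = - det H" unfolding det_3 by simp
  then have "det H = l1 * (l2 * l3)" using l(4)[of 0] by simp
  then show ?thesis using l(1-3) by (simp add: mult_neg_neg)
qed

lemma signature_1_2_spacelike:
  fixes H :: "real^3^3"
  assumes "signature_1_2 H"
  obtains z where "z \<bullet> (H *v z) < 0"
proof -
  obtain l1 l2 l3 where l: "l2 < 0" "\<And>x. det (x *\<^sub>R mat 1 - H) = (x - l1) * (x - l2) * (x - l3)"
    using assms unfolding signature_1_2_def by blast
  obtain z where z: "z \<noteq> 0" "H *v z = l2 *\<^sub>R z"
    using eigenvector_exists[of l2 H] l(2) by auto
  have "z \<bullet> (H *v z) = l2 * (z \<bullet> z)" unfolding z(2) by simp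
  also have "\<dots> < 0" using l(1) z(1) by (simp add: mult_neg_pos)
  finally show thesis by (rule that)
qed

section \<open>Positivity of the metric on the index cone\<close>

text \<open>On the index cone, \<open>y\<close> itself is timelike for the Hessian: \<open>Hess f(y)(y,y) = 6 f(y) > 0\<close>.\<close>

lemma hessian_cubic_symmetric: "transpose (hessian (cubic c) y) = hessian (cubic c) y"
  unfolding transpose_def by (simp add: vec_eq_iff hessian_cubic d2f_sym)

lemma hessian_cubic_times_point: "(hessian (cubic c) y *v y) $ i = 2 * d1f c y i"
  unfolding matrix_vector_mult_def by (simp add: hessian_cubic d2f_euler)

lemma hessian_cubic_euler: "y \<bullet> (hessian (cubic c) y *v y) = 6 * cubic c y"
proof -
  have "y \<bullet> (hessian (cubic c) y *v y) = 2 * (\<Sum>i\<in>UNIV. d1f c y i * y$i)"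
    unfolding inner_vec_def hessian_cubic_times_point by (simp add: sum_distrib_left mult_ac)
  then show ?thesis by (simp add: d1f_euler)
qed

definition metric_coef :: "(3\<Rightarrow>3\<Rightarrow>3\<Rightarrow>real) \<Rightarrow> real^3 \<Rightarrow> real^3^3" where
  "metric_coef c y = (\<chi> i j. - dlog2 c i j y / 4)"

lemma metric_coef_symmetric: "transpose (metric_coef c y) = metric_coef c y"
  unfolding transpose_def metric_coef_def by (simp add: vec_eq_iff dlog2_sym)

text \<open>By Euler's identity \<open>\<nabla>f = Hy/2\<close>, the metric is \<open>(-4fH + (Hy)(Hy)\<^sup>T)/(16f\<^sup>2)\<close>.\<close>

lemma metric_coef_rank_one:
  assumes "cubic c y \<noteq> 0"
  defines "H \<equiv> hessian (cubic c) y" and "a \<equiv> cubic c y"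
  shows "metric_coef c y = (1 / (16 * a^2)) *\<^sub>R (\<chi> i j. (- 4 * a) * H$i$j + (H *v y)$i * (H *v y)$j)"
  using assms unfolding metric_coef_def H_def a_def
  by (simp add: vec_eq_iff hessian_cubic hessian_cubic_times_point dlog2_def field_simps power2_eq_square)

lemma quadratic_rank_one_update:
  fixes H :: "real^'n^'n" and b u :: "real^'n"
  shows "u \<bullet> ((\<chi> i j. k * H$i$j + b$i * b$j) *v u) = k * (u \<bullet> (H *v u)) + (b \<bullet> u)^2"
  unfolding inner_vec_def matrix_vector_mult_def power2_eq_square
  by (simp add: sum.distrib sum_distrib_left sum_product algebra_simps)

text \<open>On the index cone the metric is positive semidefinite, by reverse Cauchy--Schwarz and \<open>H(y,y) = 6f\<close>.\<close>

lemma metric_coef_psd: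
  assumes cone: "y \<in> index_cone (cubic c)"
  shows "0 \<le> u \<bullet> (metric_coef c y *v u)"
proof -
  define H where "H = hessian (cubic c) y"
  define a where "a = cubic c y"
  have apos: "a > 0" and sig: "signature_1_2 H"
    using cone unfolding index_cone_def H_def a_def by auto
  have sym: "transpose H = H" unfolding H_def by (rule hessian_cubic_symmetric)
  obtain z where z: "z \<bullet> (H *v z) < 0" using signature_1_2_spacelike[OF sig] by blast
  have s: "y \<bullet> (H *v y) = 6 * a" unfolding H_def a_def by (rule hessian_cubic_euler)
  have "(y \<bullet> (H *v y)) * (u \<bullet> (H *v u)) \<le> (y \<bullet> (H *v u))^2"
    by (rule lorentz_reverse_cauchy_schwarz[OF sym signature_1_2_det_pos[OF sig] _ z]) (simp add: s apos)
  then have reverse_cs: "6 * a * (u \<bullet> (H *v u)) \<le> (y \<bullet> (H *v u))^2" unfolding s .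
  have "(- 4 * a) * (u \<bullet> (H *v u)) + (y \<bullet> (H *v u))^2
      = 2/3 * ((y \<bullet> (H *v u))^2 - 6 * a * (u \<bullet> (H *v u))) + (y \<bullet> (H *v u))^2 / 3"
    by (simp add: algebra_simps)
  then have num: "0 \<le> (- 4 * a) * (u \<bullet> (H *v u)) + (y \<bullet> (H *v u))^2"
    using reverse_cs zero_le_power2[of "y \<bullet> (H *v u)"] by linarith
  have b: "(H *v y) \<bullet> u = y \<bullet> (H *v u)"
    using dot_lmul_matrix[of y H u] transpose_matrix_vector[of H y] sym by simp
  have "u \<bullet> (metric_coef c y *v u)
      = (u \<bullet> ((\<chi> i j. (- 4 * a) * H$i$j + (H *v y)$i * (H *v y)$j) *v u)) / (16 * a^2)"
    unfolding metric_coef_rank_one[OF apos[unfolded a_def, THEN less_imp_neq, symmetric]] H_def[symmetric] a_def[symmetric]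
      scaleR_matrix_vector_assoc[symmetric] inner_scaleR_right by simp
  also have "\<dots> = ((- 4 * a) * (u \<bullet> (H *v u)) + (y \<bullet> (H *v u))^2) / (16 * a^2)"
    unfolding quadratic_rank_one_update b ..
  finally show ?thesis using num by simp
qed

text \<open>and nondegenerate: its determinant is \<open>det H/(128 f\<^sup>3)\<close>.\<close>

lemma metric_coef_det_pos:
  assumes cone: "y \<in> index_cone (cubic c)"
  shows "det (metric_coef c y) > 0"
proof -
  define H where "H = hessian (cubic c) y"
  define a where "a = cubic c y"
  have apos: "a > 0" and sig: "signature_1_2 H"
    using cone unfolding index_cone_def H_def a_def by auto
  have s: "y \<bullet> (H *v y) = 6 * a" unfolding H_def a_def by (rule hessian_cubic_euler)
  have "det (metric_coef c y) = (1 / (16 * a^2))^3 * ((- 4 * a)^3 * det H + (- 4 * a)^2 * det H * (y \<bullet> (H *v y)))"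
    unfolding metric_coef_rank_one[OF apos[unfolded a_def, THEN less_imp_neq, symmetric]] H_def[symmetric] a_def[symmetric]
      det3_scaleR det_rank_one_update ..
  also have "\<dots> = (1 / (16 * a^2))^3 * (32 * a^3 * det H)"
    unfolding s by (simp add: algebra_simps power3_eq_cube power2_eq_square)
  finally show ?thesis using apos signature_1_2_det_pos[OF sig] by simp
qed

section \<open>The curvature bounds\<close>

lemma gmat_metric_coef:
  assumes "cubic c (Imv t) > 0"
  shows "gmat c t = (\<chi> i j. complex_of_real (metric_coef c (Imv t) $ i $ j))"
  by (simp add: vec_eq_iff gmat_entry[OF assms] metric_coef_def)

lemma det_complexify3: "det (\<chi> i j. complex_of_real (A$i$j) :: complex^3^3) = complex_of_real (det A)"
  unfolding det_3 by simp

lemma matrix_inv_invertible: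
  fixes A :: "'a::semiring_1^'n^'n"
  assumes "invertible A"
  shows "matrix_inv A ** A = mat 1" "A ** matrix_inv A = mat 1"
proof -
  obtain B where "A ** B = mat 1 \<and> B ** A = mat 1" using assms unfolding invertible_def by blast
  then have "A ** matrix_inv A = mat 1 \<and> matrix_inv A ** A = mat 1"
    unfolding matrix_inv_def by (rule someI)
  then show "matrix_inv A ** A = mat 1" "A ** matrix_inv A = mat 1" by simp_all
qed

lemma gmat_inverse:
  assumes cone: "Imv t \<in> index_cone (cubic c)"
  shows "matrix_inv (gmat c t) ** gmat c t = mat 1" "gmat c t ** matrix_inv (gmat c t) = mat 1"
proof -
  have pos: "cubic c (Imv t) > 0" using cone unfolding index_cone_def by simp
  have "det (gmat c t) = complex_of_real (det (metric_coef c (Imv t)))"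
    unfolding gmat_metric_coef[OF pos] det_complexify3 ..
  then have "invertible (gmat c t)"
    using metric_coef_det_pos[OF cone] by (simp add: invertible_det_nz)
  then show "matrix_inv (gmat c t) ** gmat c t = mat 1" "gmat c t ** matrix_inv (gmat c t) = mat 1"
    by (rule matrix_inv_invertible)+
qed

lemma gform_herm:
  assumes "cubic c (Imv t) > 0"
  shows "gform (cubic c) t X Y = herm (metric_coef c (Imv t)) X Y"
  unfolding gform_def herm_def amwp_g_cubic[OF assms] metric_coef_def by simp

lemma gform_self:
  assumes cone: "Imv t \<in> index_cone (cubic c)"
  obtains r where "r \<ge> 0" "gform (cubic c) t X X = complex_of_real r"
proof -
  have pos: "cubic c (Imv t) > 0" using cone unfolding index_cone_def by simp
  show thesis
    using herm_self_nonneg[OF metric_coef_symmetric metric_coef_psd[OF cone], of X]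
    by (intro that[of "Re (gform (cubic c) t X X)"]) (simp_all add: gform_herm[OF pos] complex_eq_iff)
qed

lemma inverse_metric_tri_nonneg:
  fixes X Y :: "complex^3"
  assumes cone: "Imv t \<in> index_cone (cubic c)"
  obtains r where "r \<ge> 0"
    "(\<Sum>d\<in>UNIV. \<Sum>e\<in>UNIV. matrix_inv (gmat c t) $ e $ d * tri_vec c X Y e * tri_vec c (cvec X) (cvec Y) d) = complex_of_real r"
proof -
  have pos: "cubic c (Imv t) > 0" using cone unfolding index_cone_def by simp
  define P where "P = metric_coef c (Imv t)"
  define tv where "tv = (\<chi> e. tri_vec c X Y e)"
  define z where "z = tv v* matrix_inv (gmat c t)"
  have "z v* gmat c t = tv"
    unfolding z_def vector_matrix_mul_assoc gmat_inverse(1)[OF cone] by simp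
  then have tv_z: "tri_vec c X Y d = (\<Sum>e\<in>UNIV. z$e * complex_of_real (P$e$d))" for d
    unfolding vec_eq_iff vector_matrix_mult_def tv_def gmat_metric_coef[OF pos] P_def
    by (simp add: mult.commute)
  have "(\<Sum>d\<in>UNIV. \<Sum>e\<in>UNIV. matrix_inv (gmat c t) $ e $ d * tri_vec c X Y e * tri_vec c (cvec X) (cvec Y) d)
      = (\<Sum>d\<in>UNIV. z$d * cnj (tri_vec c X Y d))"
    unfolding z_def tv_def vector_matrix_mult_def tri_vec_cvec
    by (simp add: sum_distrib_left sum_distrib_right mult_ac)
  also have "\<dots> = herm P z z"
    unfolding tv_z herm_def cnj_sum sum_distrib_left
    by (simp add: symmetric_matrix_entry[OF metric_coef_symmetric] P_def mult_ac)
  finally show thesis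
    using herm_self_nonneg[OF metric_coef_symmetric metric_coef_psd[OF cone], of z]
    by (intro that[of "Re (herm P z z)"]) (simp_all add: P_def complex_eq_iff)
qed

lemma bisec_lower_bound:
  assumes cone: "Imv t \<in> index_cone (cubic c)"
    and x: "gform (cubic c) t X X = complex_of_real x" "x > 0"
    and w: "gform (cubic c) t Y Y = complex_of_real w" "w > 0"
  shows "bisec (cubic c) t X Y \<ge> -1 - Re (gform (cubic c) t X Y * gform (cubic c) t Y X) / (x * w)"
proof -
  have pos: "cubic c (Imv t) > 0" using cone unfolding index_cone_def by simp
  define A where "A = cubic c (Imv t)"
  define m where "m = Re (gform (cubic c) t X Y * gform (cubic c) t Y X)"
  obtain sg where sg: "sg \<ge> 0"
    "(\<Sum>d\<in>UNIV. \<Sum>e\<in>UNIV. matrix_inv (gmat c t) $ e $ d * tri_vec c X Y e * tri_vec c (cvec X) (cvec Y) d) = complex_of_real sg"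
    using inverse_metric_tri_nonneg[OF cone] by blast
  have "gform (cubic c) t Y X = cnj (gform (cubic c) t X Y)"
    unfolding gform_herm[OF pos] by (rule herm_swap[OF metric_coef_symmetric])
  then have mc: "gform (cubic c) t X Y * gform (cubic c) t Y X = complex_of_real m"
    unfolding m_def by (simp add: complex_eq_iff)
  have "Rform (cubic c) t X Y = - complex_of_real sg / (64 * (complex_of_real A)^2)
      + complex_of_real x * complex_of_real w + complex_of_real m"
    unfolding curvature_identity[OF pos gmat_inverse[OF cone]] sg(2) mc x(1) w(1) A_def ..
  then have "Rform (cubic c) t X Y = complex_of_real (- sg / (64 * A^2) + x * w + m)" by simp
  then have "bisec (cubic c) t X Y = (sg / (64 * A^2) - x * w - m) / (x * w)"
    unfolding bisec_def x(1) w(1) by (simp flip: of_real_mult of_real_minus of_real_divide)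
  also have "\<dots> = sg / (64 * A^2 * (x * w)) - 1 - m / (x * w)"
    using x(2) w(2) by (simp add: field_simps)
  finally have "bisec (cubic c) t X Y = sg / (64 * A^2 * (x * w)) - 1 - m / (x * w)" .
  moreover have "0 \<le> sg / (64 * A^2 * (x * w))" using sg(1) x(2) w(2) by simp
  ultimately show ?thesis unfolding m_def by linarith
qed

text \<open>Holomorphic bisectional (and sectional) curvature is at least \<open>-2\<close>, by Cauchy--Schwarz.\<close>

lemma bisec_ge_minus_two:
  assumes cone: "Imv t \<in> index_cone (cubic c)"
  shows "bisec (cubic c) t X Y \<ge> -2"
proof -
  have pos: "cubic c (Imv t) > 0" using cone unfolding index_cone_def by simp
  obtain x where x: "x \<ge> 0" "gform (cubic c) t X X = complex_of_real x" using gform_self[OF cone] by blast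
  obtain w where w: "w \<ge> 0" "gform (cubic c) t Y Y = complex_of_real w" using gform_self[OF cone] by blast
  show ?thesis
  proof (cases "x > 0 \<and> w > 0")
    case True
    have "Re (gform (cubic c) t X Y * gform (cubic c) t Y X) \<le> x * w"
      using herm_cauchy_schwarz[OF metric_coef_symmetric metric_coef_psd[OF cone], of Y X] True x w
      unfolding gform_herm[OF pos] by simp
    then have "Re (gform (cubic c) t X Y * gform (cubic c) t Y X) / (x * w) \<le> 1"
      using True by (simp add: divide_le_eq)
    moreover have "bisec (cubic c) t X Y \<ge> -1 - Re (gform (cubic c) t X Y * gform (cubic c) t Y X) / (x * w)"
      using True by (intro bisec_lower_bound[OF cone x(2) _ w(2)]) auto
    ultimately show ?thesis by linarith
  next
    case False
    then have "x = 0 \<or> w = 0" using x(1) w(1) by linarith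
    then show ?thesis unfolding bisec_def x(2) w(2) by auto
  qed
qed

lemma frame_completeness:
  assumes uf: "unitary_frame f t e"
  shows "(\<Sum>a\<in>UNIV. gform f t X (e a) * gform f t (e a) X) = gform f t X X"
proof -
  define G where "G = ((\<chi> i j. amwp_g f i j t) :: complex^3^3)"
  define E where "E = ((\<chi> i a. (e a)$i) :: complex^3^3)"
  define Ec where "Ec = ((\<chi> i a. cnj ((e a)$i)) :: complex^3^3)"
  have entries: "(transpose E ** (G ** Ec)) $ a $ b = gform f t (e a) (e b)" for a b
    unfolding matrix_matrix_mult_def transpose_def gform_def E_def Ec_def G_def
    by (simp add: sum_3 algebra_simps)
  have "transpose E ** (G ** Ec) = mat 1"
    using uf unfolding unitary_frame_def by (simp add: vec_eq_iff entries mat_def)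
  then have "(G ** Ec) ** transpose E = mat 1" using matrix_left_right_inverse by blast
  then have "G ** (Ec ** transpose E) = mat 1" by (simp add: matrix_mul_assoc)
  then have inverse: "(Ec ** transpose E) ** G = mat 1" using matrix_left_right_inverse by blast
  have "(\<Sum>a\<in>UNIV. gform f t X (e a) * gform f t (e a) X)
     = (\<Sum>i\<in>UNIV. \<Sum>l\<in>UNIV. (G ** ((Ec ** transpose E) ** G)) $ i $ l * X$i * cnj (X$l))"
    unfolding matrix_matrix_mult_def transpose_def gform_def E_def Ec_def G_def
    by (simp add: sum_3 algebra_simps)
  then show ?thesis unfolding inverse unfolding gform_def G_def by simp
qed

text \<open>Summing \<open>bisec_lower_bound\<close> over a unitary frame gives \<open>Ric(X) \<ge> -3 - g(X,\<bar>X) = -4\<close>.\<close>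

lemma ricci_ge_minus_four:
  assumes cone: "Imv t \<in> index_cone (cubic c)"
    and uf: "unitary_frame (cubic c) t e" and unit: "gform (cubic c) t X X = 1"
  shows "ricci (cubic c) t e X \<ge> -4"
proof -
  have frame_unit: "gform (cubic c) t (e a) (e a) = 1" for a
    using uf unfolding unitary_frame_def by simp
  have "bisec (cubic c) t X (e a) \<ge> -1 - Re (gform (cubic c) t X (e a) * gform (cubic c) t (e a) X)" for a
    using bisec_lower_bound[OF cone, of X 1 "e a" 1] unit frame_unit by simp
  then have "ricci (cubic c) t e X \<ge> (\<Sum>a\<in>UNIV. -1 - Re (gform (cubic c) t X (e a) * gform (cubic c) t (e a) X))"
    unfolding ricci_def by (intro sum_mono)
  also have "(\<Sum>a\<in>UNIV. -1 - Re (gform (cubic c) t X (e a) * gform (cubic c) t (e a) X))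
      = -3 - Re (\<Sum>a\<in>UNIV. gform (cubic c) t X (e a) * gform (cubic c) t (e a) X)"
    by (simp add: sum_subtractf Re_sum)
  also have "\<dots> = -4" unfolding frame_completeness[OF uf] unit by simp
  finally show ?thesis by simp
qed

lemma scalar_ge_minus_twelve:
  assumes cone: "Imv t \<in> index_cone (cubic c)" and uf: "unitary_frame (cubic c) t e"
  shows "scalar_curv (cubic c) t e \<ge> -12"
proof -
  have "ricci (cubic c) t e (e a) \<ge> -4" for a
    using ricci_ge_minus_four[OF cone uf] uf unfolding unitary_frame_def by simp
  then have "scalar_curv (cubic c) t e \<ge> (\<Sum>a\<in>(UNIV::3 set). -4)"
    unfolding scalar_curv_def by (intro sum_mono)
  then show ?thesis by simp
qed

theorem mainTheorem4:
  fixes c :: "3 \<Rightarrow> 3 \<Rightarrow> 3 \<Rightarrow> real" and t :: "complex^3"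
  assumes "Imv t \<in> index_cone (cubic c)"
  shows "(\<forall>X Y. X \<noteq> 0 \<longrightarrow> Y \<noteq> 0 \<longrightarrow> bisec (cubic c) t X Y \<ge> -2)
       \<and> (\<forall>X. X \<noteq> 0 \<longrightarrow> bisec (cubic c) t X X \<ge> -2)
       \<and> (\<forall>e X. unitary_frame (cubic c) t e \<longrightarrow> gform (cubic c) t X X = 1
               \<longrightarrow> ricci (cubic c) t e X \<ge> -4)
       \<and> (\<forall>e. unitary_frame (cubic c) t e \<longrightarrow> scalar_curv (cubic c) t e \<ge> -12)"
  using bisec_ge_minus_two[OF assms] ricci_ge_minus_four[OF assms] scalar_ge_minus_twelve[OF assms]
  by blast

end
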